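(* Let $A$ be a primitive axial algebra of Jordan type $\tfrac12$ and let $a,b$ be distinct $\tfrac12$-axes such that $N=N_{a,b}$ has an identity element $\mathbf 1$ and $ab=-\tfrac14\mathbf 1+\tfrac12a+\tfrac12b$. Then, for $\{x,y\}=\{a,b\}$: (1) $\dim N=3$ and $x^{\tau(y)}=\mathbf 1-x$; (2) $N_{1/2}(x)=\mathbb F(\mathbf 1-2y)$; (3) $|\tau(a)\tau(b)|\in\{2,4\}$; (4) $|\tau(a)\tau(b)|=2$ if and only if $\tau(z)=\tau(\mathbf 1-z)$ for $z\in\{a,b\}$; (5) if $|\tau(a)\tau(b)|=4$ then $\tau(a)\tau(\mathbf 1-a)=\tau(b)\tau(\mathbf 1-b)=:t$ and the center of $\langle\tau(a),\tau(b)\rangle$ is $\langle t\rangle$; (6) $\mathbf 1-a$ and $\mathbf 1-b$ are $\tfrac12$-axes, and for all $u\in\{a,\mathbf 1-a\}$, $v\in\{b,\mathbf 1-b\}$ one has $uv=-\tfrac14\mathbf 1+\tfrac12u+\tfrac12v$ and $N_{u,v}=N$.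
   Context: $\mathbb F$ is a field of characteristic $\neq 2$. For a commutative $\mathbb F$-algebra $A$, a subalgebra $N$, $x\in N$ and $\lambda\in\mathbb F$, put $N_\lambda(x)=\{y\in N: yx=\lambda y\}$ (and $A_\lambda(x)$ similarly). A $\tfrac12$-axis is an idempotent $a$ with $A=A_1(a)\oplus A_0(a)\oplus A_{1/2}(a)$, $A_1(a)=\mathbb F a$, and with $A_+(a)=A_1(a)\oplus A_0(a)$, $A_-(a)=A_{1/2}(a)$ satisfying $A_+A_+\subseteq A_+$, $A_+A_-\subseteq A_-$, $A_-A_-\subseteq A_+$, $A_0(a)A_0(a)\subseteq A_0(a)$. A primitive axial algebra of Jordan type $\tfrac12$ is a commutative algebra generated by $\tfrac12$-axes. The Miyamoto involution $\tau(a)$ is the automorphism acting as $1$ on $A_+(a)$ and $-1$ on $A_-(a)$. $N_{a,b}$ is the subalgebra generated by $a,b$; an identity element of $N$ is $\mathbf 1\in N$ with $\mathbf 1n=n$ for all $n\in N$. *)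

theory Defs
  imports Complex_Main
begin

text \<open>A commutative (not necessarily associative) algebra over the field 'f is
given by a scalar multiplication sc and a product m on the type 'v,
where the whole type 'v is the algebra A.\<close>

definition comm_alg :: "('f::field \<Rightarrow> 'v::ab_group_add \<Rightarrow> 'v) \<Rightarrow> ('v \<Rightarrow> 'v \<Rightarrow> 'v) \<Rightarrow> bool" where
  "comm_alg sc m \<longleftrightarrow> vector_space sc
     \<and> (\<forall>x y. m x y = m y x)
     \<and> (\<forall>x y z. m (x + y) z = m x z + m y z)
     \<and> (\<forall>c x y. m (sc c x) y = sc c (m x y))"

definition subalg :: "('f::field \<Rightarrow> 'v::ab_group_add \<Rightarrow> 'v) \<Rightarrow> ('v \<Rightarrow> 'v \<Rightarrow> 'v) \<Rightarrow> 'v set \<Rightarrow> bool" where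
  "subalg sc m N \<longleftrightarrow> module.subspace sc N \<and> (\<forall>x\<in>N. \<forall>y\<in>N. m x y \<in> N)"

definition gen_alg :: "('f::field \<Rightarrow> 'v::ab_group_add \<Rightarrow> 'v) \<Rightarrow> ('v \<Rightarrow> 'v \<Rightarrow> 'v) \<Rightarrow> 'v set \<Rightarrow> 'v set" where
  "gen_alg sc m X = \<Inter>{N. subalg sc m N \<and> X \<subseteq> N}"

definition eig :: "('f::field \<Rightarrow> 'v::ab_group_add \<Rightarrow> 'v) \<Rightarrow> ('v \<Rightarrow> 'v \<Rightarrow> 'v) \<Rightarrow> 'v set \<Rightarrow> 'v \<Rightarrow> 'f \<Rightarrow> 'v set" where
  "eig sc m N x l = {y \<in> N. m y x = sc l y}"

definition Aplus :: "('f::field \<Rightarrow> 'v::ab_group_add \<Rightarrow> 'v) \<Rightarrow> ('v \<Rightarrow> 'v \<Rightarrow> 'v) \<Rightarrow> 'v \<Rightarrow> 'v set" where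
  "Aplus sc m a = {u + w | u w. u \<in> eig sc m UNIV a 1 \<and> w \<in> eig sc m UNIV a 0}"

definition Aminus :: "('f::field \<Rightarrow> 'v::ab_group_add \<Rightarrow> 'v) \<Rightarrow> ('v \<Rightarrow> 'v \<Rightarrow> 'v) \<Rightarrow> 'v \<Rightarrow> 'v set" where
  "Aminus sc m a = eig sc m UNIV a (1/2)"

definition half_axis :: "('f::field \<Rightarrow> 'v::ab_group_add \<Rightarrow> 'v) \<Rightarrow> ('v \<Rightarrow> 'v \<Rightarrow> 'v) \<Rightarrow> 'v \<Rightarrow> bool" where
  "half_axis sc m a \<longleftrightarrow>
     m a a = a
     \<and> (\<forall>y. \<exists>y1 y0 yh. y1 \<in> eig sc m UNIV a 1 \<and> y0 \<in> eig sc m UNIV a 0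
            \<and> yh \<in> eig sc m UNIV a (1/2) \<and> y = y1 + y0 + yh)
     \<and> (\<forall>y1 y0 yh. y1 \<in> eig sc m UNIV a 1 \<and> y0 \<in> eig sc m UNIV a 0
            \<and> yh \<in> eig sc m UNIV a (1/2) \<and> y1 + y0 + yh = 0
            \<longrightarrow> y1 = 0 \<and> y0 = 0 \<and> yh = 0)
     \<and> eig sc m UNIV a 1 = range (\<lambda>c. sc c a)
     \<and> (\<forall>x\<in>Aplus sc m a. \<forall>y\<in>Aplus sc m a. m x y \<in> Aplus sc m a)
     \<and> (\<forall>x\<in>Aplus sc m a. \<forall>y\<in>Aminus sc m a. m x y \<in> Aminus sc m a)
     \<and> (\<forall>x\<in>Aminus sc m a. \<forall>y\<in>Aminus sc m a. m x y \<in> Aplus sc m a)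
     \<and> (\<forall>x\<in>eig sc m UNIV a 0. \<forall>y\<in>eig sc m UNIV a 0. m x y \<in> eig sc m UNIV a 0)"

definition prim_axial_half :: "('f::field \<Rightarrow> 'v::ab_group_add \<Rightarrow> 'v) \<Rightarrow> ('v \<Rightarrow> 'v \<Rightarrow> 'v) \<Rightarrow> bool" where
  "prim_axial_half sc m \<longleftrightarrow> comm_alg sc m
     \<and> (\<exists>X. (\<forall>x\<in>X. half_axis sc m x) \<and> gen_alg sc m X = UNIV)"

definition tau :: "('f::field \<Rightarrow> 'v::ab_group_add \<Rightarrow> 'v) \<Rightarrow> ('v \<Rightarrow> 'v \<Rightarrow> 'v) \<Rightarrow> 'v \<Rightarrow> 'v \<Rightarrow> 'v" where
  "tau sc m a y = (THE z. \<exists>p\<in>Aplus sc m a. \<exists>q\<in>Aminus sc m a. y = p + q \<and> z = p - q)"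

text \<open>Order of a map under composition; 0 encodes infinite order.\<close>
definition ord_fun :: "('a \<Rightarrow> 'a) \<Rightarrow> nat" where
  "ord_fun f = (if \<exists>n>0. f ^^ n = id then LEAST n. n > 0 \<and> f ^^ n = id else 0)"

inductive_set gen_grp :: "('a \<Rightarrow> 'a) set \<Rightarrow> ('a \<Rightarrow> 'a) set" for S where
  gen_id: "id \<in> gen_grp S"
| gen_base: "s \<in> S \<Longrightarrow> s \<in> gen_grp S"
| gen_comp: "f \<in> gen_grp S \<Longrightarrow> g \<in> gen_grp S \<Longrightarrow> f \<circ> g \<in> gen_grp S"
| gen_inv: "f \<in> gen_grp S \<Longrightarrow> inv f \<in> gen_grp S"

definition center :: "('a \<Rightarrow> 'a) set \<Rightarrow> ('a \<Rightarrow> 'a) set" where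
  "center G = {g \<in> G. \<forall>h\<in>G. g \<circ> h = h \<circ> g}"

end

theory Submission
  imports Defs
begin

text \<open>
  Let \<open>{x, y} = {a, b}\<close>. In the basis \<open>e, x, y\<close> the product of \<open>N\<close> is determined by
  \<open>xy = -e/4 + x/2 + y/2\<close>, so \<open>N\<close> is the span of \<open>e, x, y\<close> and parts (1), (2) and (6) are coordinate computations. In
  particular \<open>e - 2x\<close> spans the \<open>1/2\<close>-eigenspace of \<open>y\<close> in \<open>N\<close>, whence \<open>\<tau>(y)\<close> maps \<open>x\<close> to
  \<open>e - x\<close>. As \<open>\<tau>(y)\<close> is an automorphism, \<open>e - x\<close> is again a \<open>1/2\<close>-axis and
  \<open>\<tau>(e - x) = \<tau>(y) \<tau>(x) \<tau>(y)\<close>; and since \<open>e - x\<close> lies in the \<open>0\<close>-eigenspace of \<open>x\<close>,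
  \<open>\<tau>(x)\<close> commutes with \<open>\<tau>(e - x)\<close>. For the involutions \<open>s = \<tau>(a)\<close>, \<open>r = \<tau>(b)\<close> this says
  that \<open>s\<close> commutes with \<open>rsr\<close>, i.e. \<open>(sr)\<^sup>4 = 1\<close>, and (3)--(5) are facts about the dihedral
  group generated by \<open>s\<close> and \<open>r\<close>.
\<close>

section \<open>Dihedral groups generated by two involutions\<close>

lemma ord_fun_2_or_4:
  fixes f :: "'a \<Rightarrow> 'a"
  assumes f4: "f \<circ> f \<circ> f \<circ> f = id" and f1: "f \<noteq> id"
  shows "ord_fun f = (if f \<circ> f = id then 2 else 4)"
proof -
  have p1: "f ^^ 1 = f" by simp
  have p2: "f ^^ 2 = f \<circ> f" by (simp add: numeral_eq_Suc)
  have p3: "f ^^ 3 = f \<circ> f \<circ> f" by (simp add: numeral_eq_Suc o_assoc)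
  have p4: "f ^^ 4 = f \<circ> f \<circ> f \<circ> f" by (simp add: numeral_eq_Suc o_assoc)
  have f3: "f \<circ> f \<circ> f \<noteq> id"
  proof
    assume "f \<circ> f \<circ> f = id"
    then have "f = f \<circ> f \<circ> f \<circ> f" by (simp add: o_assoc)
    with f4 f1 show False by simp
  qed
  have ex: "\<exists>n>0. f ^^ n = id" using p4 f4 by (metis zero_less_numeral)
  show ?thesis
  proof (cases "f \<circ> f = id")
    case True
    have "(LEAST n. n > 0 \<and> f ^^ n = id) = 2"
    proof (rule Least_equality)
      fix n :: nat assume "0 < n \<and> f ^^ n = id"
      moreover have "n \<noteq> 1" using calculation f1 by auto
      ultimately show "2 \<le> n" by linarith
    qed (use True p2 in simp)
    then show ?thesis using True ex unfolding ord_fun_def by simp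
  next
    case False
    have "(LEAST n. n > 0 \<and> f ^^ n = id) = 4"
    proof (rule Least_equality)
      fix n :: nat assume n: "0 < n \<and> f ^^ n = id"
      show "4 \<le> n"
      proof (rule ccontr)
        assume "\<not> 4 \<le> n"
        then have "n = 1 \<or> n = 2 \<or> n = 3" using n by linarith
        then show False using n f1 False f3 p1 p2 p3 by auto
      qed
    qed (use f4 p4 in simp)
    then show ?thesis using False ex unfolding ord_fun_def by simp
  qed
qed

lemma gen_grp_involution:
  assumes tt: "t \<circ> t = id"
  shows "gen_grp {t} = {id, t}"
proof
  have inv_t: "inv t = t" using inv_unique_comp[OF tt tt] .
  show "gen_grp {t} \<subseteq> {id, t}"
  proof
    fix g assume "g \<in> gen_grp {t}"
    then show "g \<in> {id, t}"
    proof (induction rule: gen_grp.induct)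
      case (gen_comp f g)
      then have "f = id \<or> f = t" "g = id \<or> g = t" by auto
      then show ?case by (elim disjE) (simp_all add: tt)
    next
      case (gen_inv f) then show ?case using inv_t by (auto simp: inv_id)
    qed auto
  qed
  show "{id, t} \<subseteq> gen_grp {t}" by (auto intro: gen_grp.intros)
qed

context
  fixes s r :: "'a \<Rightarrow> 'a"
  assumes ss: "s \<circ> s = id" and rr: "r \<circ> r = id"
    and dihedral: "r \<circ> s \<circ> r \<circ> s = s \<circ> r \<circ> s \<circ> r"
begin

private lemma ss_apply: "s (s z) = z" using ss by (metis comp_apply id_apply)
private lemma rr_apply: "r (r z) = z" using rr by (metis comp_apply id_apply)
private lemma dihedral_apply: "r (s (r (s z))) = s (r (s (r z)))" using dihedral by (metis comp_apply)

private lemma ss': "h \<circ> s \<circ> s = h" using ss by (metis comp_id o_assoc)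
private lemma rr': "h \<circ> r \<circ> r = h" using rr by (metis comp_id o_assoc)
private lemma dihedral': "h \<circ> r \<circ> s \<circ> r \<circ> s = h \<circ> s \<circ> r \<circ> s \<circ> r"
  using dihedral by (metis o_assoc)

private lemmas word_simps = o_assoc ss rr ss' rr' dihedral dihedral'

definition dihedral_words :: "('a \<Rightarrow> 'a) set" where
  "dihedral_words = {id, s, r, s \<circ> r, r \<circ> s, s \<circ> r \<circ> s, r \<circ> s \<circ> r, s \<circ> r \<circ> s \<circ> r}"

lemma s_comp_dihedral_words: "d \<in> dihedral_words \<Longrightarrow> s \<circ> d \<in> dihedral_words"
  unfolding dihedral_words_def by (auto simp: word_simps)

lemma r_comp_dihedral_words: "d \<in> dihedral_words \<Longrightarrow> r \<circ> d \<in> dihedral_words"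
  unfolding dihedral_words_def by (auto simp: word_simps)

text \<open>Invariance of \<open>dihedral_words\<close> under left multiplication by the group puts the group inside it.\<close>

lemma gen_grp_mult_dihedral_words:
  "g \<in> gen_grp {s, r} \<Longrightarrow>
     bij g \<and> (\<forall>d\<in>dihedral_words. g \<circ> d \<in> dihedral_words \<and> inv g \<circ> d \<in> dihedral_words)"
proof (induction rule: gen_grp.induct)
  case (gen_base g)
  then have "g = s \<or> g = r" by simp
  then show ?case
  proof
    assume "g = s"
    then show ?case using s_comp_dihedral_words o_bij[OF ss ss] inv_unique_comp[OF ss ss]
      by (simp only:) blast
  next
    assume "g = r"
    then show ?case using r_comp_dihedral_words o_bij[OF rr rr] inv_unique_comp[OF rr rr]
      by (simp only:) blast
  qed
next
  case (gen_comp f g)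
  then have "inv (f \<circ> g) = inv g \<circ> inv f" using o_inv_distrib by blast
  then show ?case using gen_comp bij_comp by (metis o_assoc)
next
  case (gen_inv g)
  then show ?case using bij_imp_bij_inv inv_inv_eq by metis
qed (simp add: inv_id bij_id[unfolded id_def])

lemma gen_grp_subset_dihedral_words: "gen_grp {s, r} \<subseteq> dihedral_words"
proof
  fix g assume "g \<in> gen_grp {s, r}"
  moreover have "id \<in> dihedral_words" unfolding dihedral_words_def by simp
  ultimately have "g \<circ> id \<in> dihedral_words" using gen_grp_mult_dihedral_words by blast
  then show "g \<in> dihedral_words" by simp
qed

lemma gen_grp_commute_srsr:
  "g \<in> gen_grp {s, r} \<Longrightarrow> bij g \<and> (s \<circ> r \<circ> s \<circ> r) \<circ> g = g \<circ> (s \<circ> r \<circ> s \<circ> r)"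
proof (induction rule: gen_grp.induct)
  case (gen_base g)
  then have "g = s \<or> g = r" by simp
  then show ?case
  proof
    assume "g = s" then show ?case using o_bij[OF ss ss] by (simp add: fun_eq_iff ss_apply dihedral_apply)
  next
    assume "g = r" then show ?case using o_bij[OF rr rr] by (simp add: fun_eq_iff rr_apply dihedral_apply)
  qed
next
  case (gen_comp f g)
  let ?t = "s \<circ> r \<circ> s \<circ> r"
  have bf: "bij f" and cf: "?t \<circ> f = f \<circ> ?t" and bg: "bij g" and cg: "?t \<circ> g = g \<circ> ?t"
    using gen_comp.IH by blast+
  have "?t \<circ> (f \<circ> g) = f \<circ> (?t \<circ> g)" unfolding comp_assoc[symmetric] cf ..
  also have "\<dots> = (f \<circ> g) \<circ> ?t" unfolding cg by (rule comp_assoc[symmetric])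
  finally show ?case using bij_comp[OF bg bf] by blast
next
  case (gen_inv g)
  let ?t = "s \<circ> r \<circ> s \<circ> r"
  have b: "bij g" and c: "?t \<circ> g = g \<circ> ?t" using gen_inv.IH by blast+
  have "?t \<circ> inv g = inv g \<circ> g \<circ> ?t \<circ> inv g" using b by (simp add: bij_is_inj)
  also have "\<dots> = inv g \<circ> (g \<circ> ?t) \<circ> inv g" by (simp only: comp_assoc)
  also have "\<dots> = inv g \<circ> (?t \<circ> g) \<circ> inv g" by (simp only: c)
  also have "\<dots> = inv g \<circ> ?t \<circ> (g \<circ> inv g)" by (simp only: comp_assoc)
  also have "\<dots> = inv g \<circ> ?t"
    using surj_iff[THEN iffD1, OF bij_is_surj[OF b]] by (simp only: comp_id)
  finally show ?case using b bij_imp_bij_inv by blast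
qed (simp add: bij_id[unfolded id_def])

lemma center_gen_grp_dihedral:
  assumes nt: "s \<circ> r \<circ> s \<circ> r \<noteq> id"
  shows "center (gen_grp {s, r}) = {id, s \<circ> r \<circ> s \<circ> r}"
proof
  have sG: "s \<in> gen_grp {s, r}" and rG: "r \<in> gen_grp {s, r}" by (auto intro: gen_grp.intros)
  then have "s \<circ> r \<circ> s \<circ> r \<in> gen_grp {s, r}" by (auto intro: gen_grp.intros)
  then show "{id, s \<circ> r \<circ> s \<circ> r} \<subseteq> center (gen_grp {s, r})"
    unfolding center_def using gen_grp_commute_srsr by (auto intro: gen_grp.intros)
  show "center (gen_grp {s, r}) \<subseteq> {id, s \<circ> r \<circ> s \<circ> r}"
  proof
    fix g assume "g \<in> center (gen_grp {s, r})"
    then have "g \<in> dihedral_words" and cs: "g \<circ> s = s \<circ> g" and cr: "g \<circ> r = r \<circ> g"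
      unfolding center_def using sG rG gen_grp_subset_dihedral_words by auto
    then consider "g = id" | "g = s" | "g = r" | "g = s \<circ> r" | "g = r \<circ> s" | "g = s \<circ> r \<circ> s"
      | "g = r \<circ> s \<circ> r" | "g = s \<circ> r \<circ> s \<circ> r"
      unfolding dihedral_words_def by blast
    then show "g \<in> {id, s \<circ> r \<circ> s \<circ> r}"
    proof cases
      case 2 then show ?thesis using cr nt by (simp add: fun_eq_iff ss_apply rr_apply)
    next
      case 3 then show ?thesis using cs nt by (simp add: fun_eq_iff ss_apply rr_apply)
    next
      case 4 then show ?thesis using cs nt by (simp add: fun_eq_iff ss_apply rr_apply)
    next
      case 5 then show ?thesis using cr nt by (simp add: fun_eq_iff ss_apply rr_apply)
    next
      case 6 then show ?thesis using cs nt by (simp add: fun_eq_iff ss_apply rr_apply)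
    next
      case 7 then show ?thesis using cr nt by (simp add: fun_eq_iff ss_apply rr_apply)
    qed simp_all
  qed
qed

end

lemma involutions_commuting_with_conjugate:
  fixes s r :: "'a \<Rightarrow> 'a"
  assumes ss: "s \<circ> s = id" and rr: "r \<circ> r = id" and sr: "s \<circ> r \<noteq> id"
    and commute: "s \<circ> (r \<circ> s \<circ> r) = (r \<circ> s \<circ> r) \<circ> s"
  shows "ord_fun (s \<circ> r) \<in> {2, 4}"
    and "ord_fun (s \<circ> r) = 2 \<longleftrightarrow> s = r \<circ> s \<circ> r \<and> r = s \<circ> r \<circ> s"
    and "ord_fun (s \<circ> r) = 4 \<Longrightarrow>
           s \<circ> (r \<circ> s \<circ> r) = r \<circ> (s \<circ> r \<circ> s)
         \<and> center (gen_grp {s, r}) = gen_grp {s \<circ> (r \<circ> s \<circ> r)}"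
proof -
  have ss': "\<And>h. h \<circ> s \<circ> s = h" and rr': "\<And>h. h \<circ> r \<circ> r = h"
    using ss rr by (metis comp_id o_assoc)+
  have dihedral: "r \<circ> s \<circ> r \<circ> s = s \<circ> r \<circ> s \<circ> r" using commute by (simp add: o_assoc)
  have f4: "(s \<circ> r) \<circ> (s \<circ> r) \<circ> (s \<circ> r) \<circ> (s \<circ> r) = id"
    by (simp add: o_assoc dihedral[symmetric] ss' rr' ss rr)
  have square: "(s \<circ> r) \<circ> (s \<circ> r) = id \<longleftrightarrow> s = r \<circ> s \<circ> r \<and> r = s \<circ> r \<circ> s"
    using ss' rr' by (metis o_assoc comp_id id_comp ss rr)
  have ord: "ord_fun (s \<circ> r) = (if (s \<circ> r) \<circ> (s \<circ> r) = id then 2 else 4)"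
    by (rule ord_fun_2_or_4[OF f4 sr])
  then show "ord_fun (s \<circ> r) \<in> {2, 4}" by simp
  show "ord_fun (s \<circ> r) = 2 \<longleftrightarrow> s = r \<circ> s \<circ> r \<and> r = s \<circ> r \<circ> s"
    using ord square by simp
  assume "ord_fun (s \<circ> r) = 4"
  then have nt: "s \<circ> r \<circ> s \<circ> r \<noteq> id" using ord by (auto simp: o_assoc)
  have t: "s \<circ> (r \<circ> s \<circ> r) = s \<circ> r \<circ> s \<circ> r" by (simp add: o_assoc)
  have tt: "(s \<circ> r \<circ> s \<circ> r) \<circ> (s \<circ> r \<circ> s \<circ> r) = id" using f4 by (simp add: o_assoc)
  show "s \<circ> (r \<circ> s \<circ> r) = r \<circ> (s \<circ> r \<circ> s)
        \<and> center (gen_grp {s, r}) = gen_grp {s \<circ> (r \<circ> s \<circ> r)}"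
    unfolding t center_gen_grp_dihedral[OF ss rr dihedral nt] gen_grp_involution[OF tt]
    using dihedral by (simp add: o_assoc)
qed

section \<open>Commutative algebras, \<open>1/2\<close>-axes and Miyamoto involutions\<close>

locale comm_algebra = vector_space sc for sc :: "'f::field \<Rightarrow> 'v::ab_group_add \<Rightarrow> 'v" +
  fixes m :: "'v \<Rightarrow> 'v \<Rightarrow> 'v"
  assumes mult_commute: "m x y = m y x"
    and mult_add_left: "m (x + y) z = m x z + m y z"
    and mult_scale_left: "m (sc c x) y = sc c (m x y)"

lemma comm_algebra_if_prim_axial_half: "prim_axial_half sc m \<Longrightarrow> comm_algebra sc m"
  unfolding prim_axial_half_def comm_alg_def comm_algebra_def comm_algebra_axioms_def by blast

context comm_algebra
begin

lemma mult_add_right: "m z (x + y) = m z x + m z y"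
  using mult_add_left mult_commute by metis

lemma mult_scale_right: "m y (sc c x) = sc c (m y x)"
  using mult_scale_left mult_commute by metis

lemma mult_zero_left: "m 0 y = 0"
  using mult_add_left[of 0 0 y] by simp

lemma mult_diff_left: "m (x - z) y = m x y - m z y"
  using mult_scale_left[of "-1" z y] mult_add_left[of x "- z" y] by (simp add: scale_minus_left)

lemma mult_diff_right: "m y (x - z) = m y x - m y z"
  using mult_diff_left mult_commute by metis

lemma subspace_eig: "subspace (eig sc m UNIV z l)"
  unfolding subspace_def eig_def
  by (auto simp: mult_zero_left mult_add_left mult_scale_left scale_right_distrib scale_left_commute)

lemma subspace_Aplus: "subspace (Aplus sc m z)"
  unfolding Aplus_def by (intro subspace_sums subspace_eig)

lemma subspace_Aminus: "subspace (Aminus sc m z)"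
  unfolding Aminus_def by (rule subspace_eig)

lemma eig_1_subset_Aplus: "eig sc m UNIV z 1 \<subseteq> Aplus sc m z"
  unfolding Aplus_def using subspace_0[OF subspace_eig] by force

lemma eig_0_subset_Aplus: "eig sc m UNIV z 0 \<subseteq> Aplus sc m z"
  unfolding Aplus_def using subspace_0[OF subspace_eig] by force

lemma gen_alg_subalg: "subalg sc m (gen_alg sc m X)"
  unfolding subalg_def gen_alg_def by (auto intro: subspace_Inter)

lemma subspace_gen_alg: "subspace (gen_alg sc m X)"
  using gen_alg_subalg unfolding subalg_def by blast

lemma gen_alg_mult: "u \<in> gen_alg sc m X \<Longrightarrow> v \<in> gen_alg sc m X \<Longrightarrow> m u v \<in> gen_alg sc m X"
  using gen_alg_subalg unfolding subalg_def by blast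

lemma gen_alg_superset: "X \<subseteq> gen_alg sc m X"
  unfolding gen_alg_def by blast

lemma gen_alg_least: "subalg sc m S \<Longrightarrow> X \<subseteq> S \<Longrightarrow> gen_alg sc m X \<subseteq> S"
  unfolding gen_alg_def by blast

context
  fixes z assumes hz: "half_axis sc m z"
begin

lemma half_axis_idem: "m z z = z"
  using hz unfolding half_axis_def by (rule conjunct1)

lemma half_axis_spans:
  "\<exists>y1 y0 yh. y1 \<in> eig sc m UNIV z 1 \<and> y0 \<in> eig sc m UNIV z 0 \<and> yh \<in> eig sc m UNIV z (1/2)
    \<and> y = y1 + y0 + yh"
  using hz[unfolded half_axis_def, THEN conjunct2, THEN conjunct1] by blast

lemma half_axis_eig_1: "eig sc m UNIV z 1 = range (\<lambda>c. sc c z)"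
  using hz[unfolded half_axis_def, THEN conjunct2, THEN conjunct2, THEN conjunct2, THEN conjunct1] .

lemma half_axis_independent:
  "y1 \<in> eig sc m UNIV z 1 \<Longrightarrow> y0 \<in> eig sc m UNIV z 0 \<Longrightarrow> yh \<in> eig sc m UNIV z (1/2)
    \<Longrightarrow> y1 + y0 + yh = 0 \<Longrightarrow> y1 = 0 \<and> y0 = 0 \<and> yh = 0"
  using hz[unfolded half_axis_def, THEN conjunct2, THEN conjunct2, THEN conjunct1] by blast

lemma half_axis_fusion:
  shows "p \<in> Aplus sc m z \<Longrightarrow> q \<in> Aplus sc m z \<Longrightarrow> m p q \<in> Aplus sc m z"
    and "p \<in> Aplus sc m z \<Longrightarrow> q \<in> Aminus sc m z \<Longrightarrow> m p q \<in> Aminus sc m z"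
    and "p \<in> Aminus sc m z \<Longrightarrow> q \<in> Aminus sc m z \<Longrightarrow> m p q \<in> Aplus sc m z"
    and "p \<in> eig sc m UNIV z 0 \<Longrightarrow> q \<in> eig sc m UNIV z 0 \<Longrightarrow> m p q \<in> eig sc m UNIV z 0"
  using hz unfolding half_axis_def by (elim conjE; blast)+

lemma half_axis_decomp: "\<exists>p\<in>Aplus sc m z. \<exists>q\<in>Aminus sc m z. y = p + q"
proof -
  obtain y1 y0 yh where "y1 \<in> eig sc m UNIV z 1" "y0 \<in> eig sc m UNIV z 0"
     "yh \<in> eig sc m UNIV z (1/2)" "y = y1 + y0 + yh"
    using half_axis_spans by blast
  then have "y1 + y0 \<in> Aplus sc m z" "yh \<in> Aminus sc m z" "y = (y1 + y0) + yh"
    unfolding Aplus_def Aminus_def by auto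
  then show ?thesis by blast
qed

lemma half_axis_decomp_unique:
  assumes "p \<in> Aplus sc m z" "q \<in> Aminus sc m z" "p' \<in> Aplus sc m z" "q' \<in> Aminus sc m z"
    and "p + q = p' + q'"
  shows "p = p' \<and> q = q'"
proof -
  obtain u w where uw: "p - p' = u + w" "u \<in> eig sc m UNIV z 1" "w \<in> eig sc m UNIV z 0"
    using subspace_diff[OF subspace_Aplus assms(1,3)] unfolding Aplus_def by blast
  have "q - q' \<in> eig sc m UNIV z (1/2)"
    using subspace_diff[OF subspace_Aminus assms(2,4)] unfolding Aminus_def .
  moreover have "u + w + (q - q') = 0" using assms(5) uw(1) by (simp add: algebra_simps)
  ultimately have "u = 0 \<and> w = 0 \<and> q - q' = 0" using half_axis_independent uw(2,3) by blast
  with uw(1) show ?thesis by simp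
qed

lemma tau_eq: "p \<in> Aplus sc m z \<Longrightarrow> q \<in> Aminus sc m z \<Longrightarrow> tau sc m z (p + q) = p - q"
  unfolding tau_def
proof (rule the_equality)
  assume "p \<in> Aplus sc m z" "q \<in> Aminus sc m z"
  then show "\<exists>p'\<in>Aplus sc m z. \<exists>q'\<in>Aminus sc m z. p + q = p' + q' \<and> p - q = p' - q'" by blast
next
  fix w assume "p \<in> Aplus sc m z" "q \<in> Aminus sc m z"
    and "\<exists>p'\<in>Aplus sc m z. \<exists>q'\<in>Aminus sc m z. p + q = p' + q' \<and> w = p' - q'"
  then show "w = p - q" using half_axis_decomp_unique by metis
qed

lemma tau_Aplus: "p \<in> Aplus sc m z \<Longrightarrow> tau sc m z p = p"
  using tau_eq[of p 0] subspace_0[OF subspace_Aminus] by simp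

lemma tau_tau: "tau sc m z (tau sc m z y) = y"
proof -
  obtain p q where pq: "p \<in> Aplus sc m z" "q \<in> Aminus sc m z" "y = p + q"
    using half_axis_decomp by blast
  then have "tau sc m z y = p + (- q)" using tau_eq by simp
  then show ?thesis using tau_eq[OF pq(1) subspace_neg[OF subspace_Aminus pq(2)]] pq(3) by simp
qed

lemma tau_comp_tau: "tau sc m z \<circ> tau sc m z = id"
  by (simp add: fun_eq_iff tau_tau)

lemma tau_add: "tau sc m z (y + y') = tau sc m z y + tau sc m z y'"
proof -
  obtain p q where pq: "p \<in> Aplus sc m z" "q \<in> Aminus sc m z" "y = p + q"
    using half_axis_decomp by blast
  obtain p' q' where pq': "p' \<in> Aplus sc m z" "q' \<in> Aminus sc m z" "y' = p' + q'"
    using half_axis_decomp by blast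
  have "y + y' = (p + p') + (q + q')" using pq pq' by (simp add: algebra_simps)
  then have "tau sc m z (y + y') = (p + p') - (q + q')"
    using tau_eq subspace_add[OF subspace_Aplus] subspace_add[OF subspace_Aminus] pq pq' by metis
  moreover have "tau sc m z y = p - q" "tau sc m z y' = p' - q'" using tau_eq pq pq' by simp_all
  ultimately show ?thesis by (simp only: add_diff_add)
qed

lemma tau_scale: "tau sc m z (sc c y) = sc c (tau sc m z y)"
proof -
  obtain p q where pq: "p \<in> Aplus sc m z" "q \<in> Aminus sc m z" "y = p + q"
    using half_axis_decomp by blast
  have "sc c y = sc c p + sc c q" using pq by (simp add: scale_right_distrib)
  then have "tau sc m z (sc c y) = sc c p - sc c q"
    using tau_eq subspace_scale[OF subspace_Aplus] subspace_scale[OF subspace_Aminus] pq by metis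
  then show ?thesis using tau_eq pq by (simp add: scale_right_diff_distrib)
qed

lemma tau_mult: "tau sc m z (m y y') = m (tau sc m z y) (tau sc m z y')"
proof -
  obtain p q where pq: "p \<in> Aplus sc m z" "q \<in> Aminus sc m z" "y = p + q"
    using half_axis_decomp by blast
  obtain p' q' where pq': "p' \<in> Aplus sc m z" "q' \<in> Aminus sc m z" "y' = p' + q'"
    using half_axis_decomp by blast
  have "m p p' \<in> Aplus sc m z" "m q q' \<in> Aplus sc m z" "m p q' \<in> Aminus sc m z"
    using half_axis_fusion pq pq' by blast+
  moreover have "m q p' \<in> Aminus sc m z"
    using half_axis_fusion(2)[OF pq'(1) pq(2)] mult_commute[of q p'] by simp
  ultimately have "m p p' + m q q' \<in> Aplus sc m z" "m p q' + m q p' \<in> Aminus sc m z"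
    using subspace_add[OF subspace_Aplus] subspace_add[OF subspace_Aminus] by blast+
  moreover have "m y y' = (m p p' + m q q') + (m p q' + m q p')"
    using pq pq' by (simp add: mult_add_left mult_add_right algebra_simps)
  ultimately have "tau sc m z (m y y') = (m p p' + m q q') - (m p q' + m q p')"
    using tau_eq by simp
  also have "\<dots> = m (p - q) (p' - q')"
    by (simp add: mult_diff_left mult_diff_right algebra_simps)
  finally show ?thesis using tau_eq pq pq' by simp
qed

end

definition algebra_aut :: "('v \<Rightarrow> 'v) \<Rightarrow> bool" where
  "algebra_aut f \<longleftrightarrow> bij f \<and> (\<forall>u v. f (u + v) = f u + f v) \<and> (\<forall>c u. f (sc c u) = sc c (f u))
      \<and> (\<forall>u v. f (m u v) = m (f u) (f v))"

lemma algebra_aut_tau: "half_axis sc m z \<Longrightarrow> algebra_aut (tau sc m z)"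
  unfolding algebra_aut_def using o_bij tau_comp_tau tau_add tau_scale tau_mult by metis

context
  fixes f assumes af: "algebra_aut f"
begin

lemma aut_add: "f (u + v) = f u + f v" and aut_scale: "f (sc c u) = sc c (f u)"
  and aut_mult: "f (m u v) = m (f u) (f v)" and aut_bij: "bij f"
  using af unfolding algebra_aut_def by blast+

lemma aut_inv_apply: "f (inv f y) = y"
  using bij_is_surj[OF aut_bij] by (rule surj_f_inv_f)

lemma aut_zero: "f 0 = 0"
  using aut_add[of 0 0] by simp

lemma aut_diff: "f (u - v) = f u - f v"
  using aut_add[of "u - v" v] by (simp add: algebra_simps)

lemma eig_aut_image: "eig sc m UNIV (f z) l = f ` eig sc m UNIV z l"
proof
  show "f ` eig sc m UNIV z l \<subseteq> eig sc m UNIV (f z) l"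
    unfolding eig_def by (auto simp: aut_mult[symmetric] aut_scale[symmetric])
  show "eig sc m UNIV (f z) l \<subseteq> f ` eig sc m UNIV z l"
  proof
    fix w assume "w \<in> eig sc m UNIV (f z) l"
    then have "f (m (inv f w) z) = f (sc l (inv f w))"
      using aut_mult aut_scale aut_inv_apply unfolding eig_def by simp
    then have "inv f w \<in> eig sc m UNIV z l"
      using bij_is_inj[OF aut_bij] unfolding eig_def by (simp add: inj_eq)
    then show "w \<in> f ` eig sc m UNIV z l"
      using aut_inv_apply by (metis imageI)
  qed
qed

lemma Aplus_aut_image: "Aplus sc m (f z) = f ` Aplus sc m z"
proof
  show "Aplus sc m (f z) \<subseteq> f ` Aplus sc m z"
  proof
    fix w assume "w \<in> Aplus sc m (f z)"
    then obtain u v where "w = f u + f v" "u \<in> eig sc m UNIV z 1" "v \<in> eig sc m UNIV z 0"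
      unfolding Aplus_def eig_aut_image by blast
    then have "w = f (u + v)" "u + v \<in> Aplus sc m z" using aut_add unfolding Aplus_def by auto
    then show "w \<in> f ` Aplus sc m z" by blast
  qed
  show "f ` Aplus sc m z \<subseteq> Aplus sc m (f z)"
    unfolding Aplus_def eig_aut_image by (auto simp: aut_add) blast
qed

lemma Aminus_aut_image: "Aminus sc m (f z) = f ` Aminus sc m z"
  unfolding Aminus_def by (rule eig_aut_image)

lemma half_axis_aut_image:
  assumes hz: "half_axis sc m z"
  shows "half_axis sc m (f z)"
  unfolding half_axis_def Aplus_aut_image Aminus_aut_image eig_aut_image
proof (intro conjI allI impI)
  show "m (f z) (f z) = f z" using half_axis_idem[OF hz] aut_mult by metis
  fix y
  obtain y1 y0 yh where "y1 \<in> eig sc m UNIV z 1" "y0 \<in> eig sc m UNIV z 0"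
    "yh \<in> eig sc m UNIV z (1/2)" "inv f y = y1 + y0 + yh"
    using half_axis_spans[OF hz] by blast
  moreover have "y = f y1 + f y0 + f yh" using calculation(4) aut_inv_apply aut_add by metis
  ultimately show "\<exists>y1 y0 yh. y1 \<in> f ` eig sc m UNIV z 1 \<and> y0 \<in> f ` eig sc m UNIV z 0
      \<and> yh \<in> f ` eig sc m UNIV z (1/2) \<and> y = y1 + y0 + yh"
    by blast
next
  fix y1 y0 yh
  assume "y1 \<in> f ` eig sc m UNIV z 1 \<and> y0 \<in> f ` eig sc m UNIV z 0
    \<and> yh \<in> f ` eig sc m UNIV z (1/2) \<and> y1 + y0 + yh = 0"
  then obtain u1 u0 uh where u: "u1 \<in> eig sc m UNIV z 1" "u0 \<in> eig sc m UNIV z 0"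
    "uh \<in> eig sc m UNIV z (1/2)" "y1 = f u1" "y0 = f u0" "yh = f uh" "f (u1 + u0 + uh) = f 0"
    using aut_add aut_zero by auto
  then have "u1 + u0 + uh = 0" using bij_is_inj[OF aut_bij] by (simp add: inj_eq)
  then have "u1 = 0 \<and> u0 = 0 \<and> uh = 0" using half_axis_independent[OF hz u(1-3)] by blast
  then show "y1 = 0" "y0 = 0" "yh = 0" using u aut_zero by simp_all
next
  show "f ` eig sc m UNIV z 1 = range (\<lambda>c. sc c (f z))"
    using half_axis_eig_1[OF hz] by (simp add: image_image aut_scale)
next
  have closed: "\<forall>u\<in>f ` S. \<forall>v\<in>f ` T. m u v \<in> f ` U" if "\<forall>u\<in>S. \<forall>v\<in>T. m u v \<in> U" for S T U
    using that by (auto simp: aut_mult[symmetric])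
  show "\<forall>u\<in>f ` Aplus sc m z. \<forall>v\<in>f ` Aplus sc m z. m u v \<in> f ` Aplus sc m z"
    "\<forall>u\<in>f ` Aplus sc m z. \<forall>v\<in>f ` Aminus sc m z. m u v \<in> f ` Aminus sc m z"
    "\<forall>u\<in>f ` Aminus sc m z. \<forall>v\<in>f ` Aminus sc m z. m u v \<in> f ` Aplus sc m z"
    "\<forall>u\<in>f ` eig sc m UNIV z 0. \<forall>v\<in>f ` eig sc m UNIV z 0. m u v \<in> f ` eig sc m UNIV z 0"
    using half_axis_fusion[OF hz] by (intro closed; blast)+
qed

lemma tau_aut_image:
  assumes hz: "half_axis sc m z"
  shows "tau sc m (f z) = f \<circ> tau sc m z \<circ> inv f"
proof
  fix y
  obtain p q where pq: "p \<in> Aplus sc m z" "q \<in> Aminus sc m z" "inv f y = p + q"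
    using half_axis_decomp[OF hz] by blast
  have "y = f p + f q"
    using pq(3) aut_add aut_inv_apply by metis
  moreover have "f p \<in> Aplus sc m (f z)" "f q \<in> Aminus sc m (f z)"
    using pq Aplus_aut_image Aminus_aut_image by auto
  ultimately have "tau sc m (f z) y = f p - f q"
    using tau_eq[OF half_axis_aut_image[OF hz]] by metis
  then show "tau sc m (f z) y = (f \<circ> tau sc m z \<circ> inv f) y"
    using pq tau_eq[OF hz] aut_diff by simp
qed

lemma aut_commute_tau:
  assumes hz: "half_axis sc m z" and fz: "f z = z"
  shows "f \<circ> tau sc m z = tau sc m z \<circ> f"
proof -
  have "tau sc m z \<circ> f = f \<circ> tau sc m z \<circ> (inv f \<circ> f)"
    using tau_aut_image[OF hz] fz by (simp add: o_assoc)
  then show ?thesis using bij_is_inj[OF aut_bij] by simp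
qed

end

end

section \<open>Two axes with \<open>ab = -e/4 + a/2 + b/2\<close>\<close>

definition coord :: "('f::field \<Rightarrow> 'v::ab_group_add \<Rightarrow> 'v) \<Rightarrow> 'v \<Rightarrow> 'v \<Rightarrow> 'v \<Rightarrow> 'f \<Rightarrow> 'f \<Rightarrow> 'f \<Rightarrow> 'v"
  where "coord sc e x y a b c = sc a e + sc b x + sc c y"

text \<open>Given this congruence rule the simplifier rewrites only the coefficients of \<open>coord\<close>, so that
  \<open>x = coord sc e x y 0 1 0\<close> and its relatives can be used as rewrite rules without looping.\<close>

lemma coord_cong:
  "a = a' \<Longrightarrow> b = b' \<Longrightarrow> c = c' \<Longrightarrow> coord sc e x y a b c = coord sc e x y a' b' c'"
  by simp

locale axis_pair = comm_algebra sc m for sc :: "'f::field \<Rightarrow> 'v::ab_group_add \<Rightarrow> 'v" and m +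
  fixes x y e :: 'v
  assumes half_axis_x: "half_axis sc m x" and half_axis_y: "half_axis sc m y"
    and x_neq_y: "x \<noteq> y" and two_neq_zero: "(2::'f) \<noteq> 0"
    and e_in_gen_alg: "e \<in> gen_alg sc m {x, y}"
    and e_unit: "\<forall>n\<in>gen_alg sc m {x, y}. m e n = n"
    and mult_x_y: "m x y = sc (-1/4) e + sc (1/2) x + sc (1/2) y"
begin

lemma axis_pair_swap: "axis_pair sc m y x e"
proof unfold_locales
  show "m y x = sc (-1/4) e + sc (1/2) y + sc (1/2) x"
    using mult_x_y mult_commute[of y x] by (simp add: add_ac)
qed (use half_axis_x half_axis_y x_neq_y two_neq_zero e_in_gen_alg e_unit in
      \<open>auto simp: insert_commute mult_commute mult_add_left mult_scale_left\<close>)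

abbreviation L :: "'f \<Rightarrow> 'f \<Rightarrow> 'f \<Rightarrow> 'v" where "L \<equiv> coord sc e x y"

lemma numerals_neq_zero: "(4::'f) \<noteq> 0" "(8::'f) \<noteq> 0" "(16::'f) \<noteq> 0" "(32::'f) \<noteq> 0" "(64::'f) \<noteq> 0"
  using power_not_zero[OF two_neq_zero, of 2] power_not_zero[OF two_neq_zero, of 3]
    power_not_zero[OF two_neq_zero, of 4] power_not_zero[OF two_neq_zero, of 5]
    power_not_zero[OF two_neq_zero, of 6]
  by simp_all

lemmas nz = two_neq_zero numerals_neq_zero

lemma x_in_gen_alg: "x \<in> gen_alg sc m {x, y}" and y_in_gen_alg: "y \<in> gen_alg sc m {x, y}"
  using gen_alg_superset by blast+

lemma e_mult_x: "m e x = x" and e_mult_y: "m e y = y" and e_mult_e: "m e e = e"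
  using e_unit x_in_gen_alg y_in_gen_alg e_in_gen_alg by blast+

lemma x_idem: "m x x = x" and y_idem: "m y y = y"
  using half_axis_idem[OF half_axis_x] half_axis_idem[OF half_axis_y] .

lemma coord_add: "L a b c + L a' b' c' = L (a + a') (b + b') (c + c')"
  unfolding coord_def by (simp add: scale_left_distrib algebra_simps)

lemma coord_scale: "sc k (L a b c) = L (k * a) (k * b) (k * c)"
  unfolding coord_def by (simp add: scale_right_distrib)

lemma coord_minus: "- L a b c = L (- a) (- b) (- c)"
  using coord_scale[of "-1" a b c] by (simp add: scale_minus_left)

lemma coord_diff: "L a b c - L a' b' c' = L (a - a') (b - b') (c - c')"
  by (simp only: diff_conv_add_uminus coord_minus coord_add)

lemma e_coord: "e = L 1 0 0" and x_coord: "x = L 0 1 0" and y_coord: "y = L 0 0 1"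
  and zero_coord: "0 = L 0 0 0"
  unfolding coord_def by simp_all

lemma coord_eqI: "a = a' \<Longrightarrow> b = b' \<Longrightarrow> c = c' \<Longrightarrow> L a b c = L a' b' c'"
  by simp

lemma e_mult_coord: "m e (L a b c) = L a b c"
  unfolding coord_def by (simp add: mult_add_right mult_scale_right e_mult_e e_mult_x e_mult_y)

lemma x_mult_coord: "m x (L a b c) = L (- c / 4) (a + b + c / 2) (c / 2)"
proof -
  have "m x (L a b c) = sc a x + sc b x + sc c (sc (-1/4) e + sc (1/2) x + sc (1/2) y)"
    unfolding coord_def
    by (simp add: mult_add_right mult_scale_right mult_commute[of x e] e_mult_x x_idem mult_x_y)
  also have "\<dots> = L (- c / 4) (a + b + c / 2) (c / 2)"
    by (simp only: x_coord e_coord y_coord coord_add coord_scale cong: coord_cong) (rule coord_eqI; simp add: field_simps nz)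
  finally show ?thesis .
qed

lemma y_mult_coord: "m y (L a b c) = L (- b / 4) (b / 2) (a + c + b / 2)"
proof -
  have "m y (L a b c) = sc a y + sc b (sc (-1/4) e + sc (1/2) x + sc (1/2) y) + sc c y"
    unfolding coord_def
    by (simp add: mult_add_right mult_scale_right mult_commute[of y e] mult_commute[of y x]
        e_mult_y y_idem mult_x_y)
  also have "\<dots> = L (- b / 4) (b / 2) (a + c + b / 2)"
    by (simp only: x_coord e_coord y_coord coord_add coord_scale cong: coord_cong) (rule coord_eqI; simp add: field_simps nz)
  finally show ?thesis .
qed

lemma mult_coord: "m (L a1 b1 c1) (L a2 b2 c2) =
   L (a1 * a2 - (b1 * c2 + c1 * b2) / 4)
     (a1 * b2 + b1 * a2 + b1 * b2 + (b1 * c2 + c1 * b2) / 2)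
     (a1 * c2 + c1 * a2 + c1 * c2 + (b1 * c2 + c1 * b2) / 2)"
proof -
  have "m (L a1 b1 c1) (L a2 b2 c2)
      = sc a1 (m e (L a2 b2 c2)) + sc b1 (m x (L a2 b2 c2)) + sc c1 (m y (L a2 b2 c2))"
    by (subst (1) coord_def) (simp add: mult_add_left mult_scale_left)
  then show ?thesis
    unfolding e_mult_coord x_mult_coord y_mult_coord coord_add coord_scale
    by (simp only:) (rule coord_eqI; simp add: field_simps nz)
qed

lemmas coord_simps = e_coord x_coord y_coord coord_add coord_scale coord_minus coord_diff mult_coord

lemma y_neq_zero: "y \<noteq> 0"
proof
  assume y0: "y = 0"
  have "sc (-1/4) e + sc (1/2) x = 0" using mult_x_y y0 mult_commute[of x 0] by (simp add: mult_zero_left)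
  moreover have "m (sc (-1/4) e + sc (1/2) x) x = sc (-1/4 + 1/2) x"
    unfolding mult_add_left mult_scale_left e_mult_x x_idem by (simp only: scale_left_distrib)
  ultimately have "sc (-1/4 + 1/2) x = 0" by (simp add: mult_zero_left)
  moreover have "(-1/4 + 1/2 :: 'f) \<noteq> 0" by (simp add: field_simps nz)
  ultimately have "x = 0" by simp
  with y0 x_neq_y show False by simp
qed

lemma e_neq_y: "e \<noteq> y"
proof
  assume ey: "e = y"
  have yx: "m y x = x" using e_mult_x ey by simp
  have x_eq: "x = sc (-1/4) y + sc (1/2) x + sc (1/2) y"
    using mult_x_y mult_commute[of x y] yx ey by simp
  have "x = m x x" using x_idem by simp
  also have "\<dots> = m (sc (-1/4) y + sc (1/2) x + sc (1/2) y) x" using x_eq by simp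
  also have "\<dots> = sc (-1/4 + 1/2 + 1/2) x"
    unfolding mult_add_left mult_scale_left yx x_idem by (simp only: scale_left_distrib)
  finally have "sc 1 x = sc (-1/4 + 1/2 + 1/2) x" by simp
  moreover have "(1::'f) - (-1/4 + 1/2 + 1/2) = 1/4" by (simp add: field_simps nz)
  then have "(1::'f) \<noteq> -1/4 + 1/2 + 1/2" using nz by auto
  ultimately have x0: "x = 0" by (simp only: scale_cancel_right) simp
  with x_eq have "sc (-1/4) y + sc (1/2) y = 0" by simp
  then have "sc (-1/4 + 1/2) y = 0" by (simp add: scale_left_distrib)
  moreover have "(-1/4 + 1/2 :: 'f) \<noteq> 0" by (simp add: field_simps nz)
  ultimately show False using y_neq_zero by simp
qed

lemma e_neq_2x: "e \<noteq> sc 2 x"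
proof
  assume e2x: "e = sc 2 x"
  then have "sc 1 x = sc 2 x" using e_mult_x by (simp add: mult_scale_left x_idem)
  moreover have "(1::'f) \<noteq> 2" using one_neq_zero[where 'a='f] by (metis one_add_one add_cancel_right_right)
  ultimately have "x = 0" by (simp only: scale_cancel_right) simp
  then have "y = 0" using e2x e_mult_y by (simp add: mult_zero_left)
  then show False using y_neq_zero by simp
qed

lemma y_in_eig_1: "sc k y \<in> eig sc m UNIV y 1"
  unfolding eig_def by (simp add: mult_scale_left y_idem)

lemma e_minus_y_in_eig_0: "sc k (e - y) \<in> eig sc m UNIV y 0"
  unfolding eig_def by (simp add: mult_scale_left mult_diff_left e_mult_y y_idem)

lemma e_minus_2x_in_eig_half: "sc k (e - sc 2 x) \<in> eig sc m UNIV y (1/2)"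
proof -
  have "m (sc k (e - sc 2 x)) y = sc (1/2) (sc k (e - sc 2 x))"
    by (simp only: coord_simps cong: coord_cong) (rule coord_eqI; simp add: field_simps nz)
  then show ?thesis unfolding eig_def by simp
qed

lemma coord_eig_decomp:
  "L a b c = sc (a + b/2 + c) y + sc (a + b/2) (e - y) + sc (-b/2) (e - sc 2 x)"
  by (simp only: coord_simps cong: coord_cong) (rule coord_eqI; simp add: field_simps nz)

lemma coord_eq_zero: "L a b c = 0 \<Longrightarrow> a = 0 \<and> b = 0 \<and> c = 0"
proof -
  assume "L a b c = 0"
  then have "sc (a + b/2 + c) y = 0 \<and> sc (a + b/2) (e - y) = 0 \<and> sc (-b/2) (e - sc 2 x) = 0"
    using half_axis_independent[OF half_axis_y] y_in_eig_1 e_minus_y_in_eig_0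
      e_minus_2x_in_eig_half coord_eig_decomp
    by metis
  then have "a + b/2 + c = 0" "a + b/2 = 0" "-b/2 = 0"
    using y_neq_zero e_neq_y e_neq_2x by auto
  then show ?thesis using two_neq_zero by (auto simp: field_simps)
qed

lemma coord_inj: "L a b c = L a' b' c' \<Longrightarrow> a = a' \<and> b = b' \<and> c = c'"
  using coord_eq_zero[of "a - a'" "b - b'" "c - c'"] by (simp only: coord_diff[symmetric]) simp

definition coord_span :: "'v set" where
  "coord_span = {L a b c | a b c. True}"

lemma coord_in_coord_span: "L a b c \<in> coord_span"
  unfolding coord_span_def by blast

lemma subspace_coord_span: "subspace coord_span"
proof (rule subspaceI)
  show "0 \<in> coord_span" using coord_in_coord_span zero_coord by metis
  show "u + v \<in> coord_span" if "u \<in> coord_span" "v \<in> coord_span" for u v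
    using that unfolding coord_span_def by (auto simp: coord_add) blast
  show "sc c u \<in> coord_span" if "u \<in> coord_span" for c u
    using that unfolding coord_span_def by (auto simp: coord_scale) blast
qed

lemma subalg_coord_span: "subalg sc m coord_span"
  unfolding subalg_def using subspace_coord_span
  unfolding coord_span_def by (auto simp: mult_coord) blast

lemma e_in_coord_span: "e \<in> coord_span" and x_in_coord_span: "x \<in> coord_span"
  and y_in_coord_span: "y \<in> coord_span"
  using coord_in_coord_span[of 1 0 0] coord_in_coord_span[of 0 1 0] coord_in_coord_span[of 0 0 1]
  by (simp_all only: e_coord[symmetric] x_coord[symmetric] y_coord[symmetric])

lemma coord_span_subset:
  assumes S: "subspace S" "e \<in> S" "x \<in> S" "y \<in> S"
  shows "coord_span \<subseteq> S"
  unfolding coord_span_def coord_def using S by (auto intro!: subspace_add subspace_scale)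

lemma gen_alg_eq_coord_span: "gen_alg sc m {x, y} = coord_span"
proof
  show "gen_alg sc m {x, y} \<subseteq> coord_span"
    using gen_alg_least[OF subalg_coord_span] x_in_coord_span y_in_coord_span by simp
  show "coord_span \<subseteq> gen_alg sc m {x, y}"
    using coord_span_subset[OF subspace_gen_alg e_in_gen_alg x_in_gen_alg y_in_gen_alg] .
qed

lemma dim_gen_alg: "dim (gen_alg sc m {x, y}) = 3"
proof (unfold gen_alg_eq_coord_span, rule dim_unique[of "{e, x, y}"])
  show "{e, x, y} \<subseteq> coord_span" using e_in_coord_span x_in_coord_span y_in_coord_span by simp
  show "coord_span \<subseteq> span {e, x, y}"
    by (intro coord_span_subset subspace_span span_base) simp_all
  have "e \<noteq> x" using coord_inj e_coord x_coord by (metis zero_neq_one)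
  then show "card {e, x, y} = 3" using x_neq_y e_neq_y by simp
  show "independent {e, x, y}"
  proof (rule independent_if_scalars_zero)
    fix u v assume "(\<Sum>w\<in>{e, x, y}. sc (u w) w) = 0" "v \<in> {e, x, y}"
    then show "u v = 0"
      using coord_eq_zero[of "u e" "u x" "u y"] \<open>e \<noteq> x\<close> x_neq_y e_neq_y
      unfolding coord_def by (auto simp: add.assoc)
  qed simp
qed

lemma eig_half_gen_alg: "eig sc m (gen_alg sc m {x, y}) x (1/2) = range (\<lambda>c. sc c (e - sc 2 y))"
proof (unfold gen_alg_eq_coord_span, intro equalityI subsetI)
  fix v assume "v \<in> eig sc m coord_span x (1/2)"
  then obtain a b c where v: "v = L a b c" and "m (L a b c) (L 0 1 0) = sc (1/2) (L a b c)"
    unfolding eig_def coord_span_def x_coord[symmetric] by blast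
  then have "L (- c / 4) (a + b + c / 2) (c / 2) = L (a / 2) (b / 2) (c / 2)"
    by (simp only: mult_coord coord_scale) (simp add: field_simps)
  then have h1: "- c / 4 = a / 2" and h2: "a + b + c / 2 = b / 2" using coord_inj by blast+
  have "c = - 4 * (- c / 4)" using nz by simp
  also have "\<dots> = - 2 * a" unfolding h1 using nz by (simp add: field_simps)
  finally have c: "c = - 2 * a" .
  have "b = 2 * ((a + b + c / 2) - b / 2)" unfolding c using nz by (simp add: field_simps)
  then have "b = 0" using h2 by simp
  then have "v = sc a (e - sc 2 y)" unfolding v c
    by (simp only: coord_simps cong: coord_cong) (rule coord_eqI; simp add: field_simps nz)
  then show "v \<in> range (\<lambda>c. sc c (e - sc 2 y))" by blast
next
  fix v assume "v \<in> range (\<lambda>c. sc c (e - sc 2 y))"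
  then obtain k where v: "v = sc k (e - sc 2 y)" by blast
  have "v = L k 0 (-2 * k)" unfolding v
    by (simp only: coord_simps cong: coord_cong) (rule coord_eqI; simp add: field_simps nz)
  moreover have "m v x = sc (1/2) v" unfolding v
    by (simp only: coord_simps cong: coord_cong) (rule coord_eqI; simp add: field_simps nz)
  ultimately show "v \<in> eig sc m coord_span x (1/2)"
    unfolding eig_def using coord_in_coord_span by simp
qed

lemma tau_y_x: "tau sc m y x = e - x"
proof -
  have "e \<in> Aplus sc m y"
    using y_in_eig_1[of 1] e_minus_y_in_eig_0[of 1] unfolding Aplus_def by force
  then have p: "sc (1/2) e \<in> Aplus sc m y" by (rule subspace_scale[OF subspace_Aplus])
  have q: "sc (-1/2) (e - sc 2 x) \<in> Aminus sc m y"
    unfolding Aminus_def by (rule e_minus_2x_in_eig_half)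
  have "x = sc (1/2) e + sc (-1/2) (e - sc 2 x)"
    by (simp only: coord_simps cong: coord_cong) (rule coord_eqI; simp add: field_simps nz)
  then have "tau sc m y x = sc (1/2) e - sc (-1/2) (e - sc 2 x)"
    using tau_eq[OF half_axis_y p q] by simp
  also have "\<dots> = e - x"
    by (simp only: coord_simps cong: coord_cong) (rule coord_eqI; simp add: field_simps nz)
  finally show ?thesis .
qed

lemma half_axis_e_minus_x: "half_axis sc m (e - x)"
  using half_axis_aut_image[OF algebra_aut_tau[OF half_axis_y] half_axis_x] tau_y_x by simp

lemma tau_e_minus_x: "tau sc m (e - x) = tau sc m y \<circ> tau sc m x \<circ> tau sc m y"
  using tau_aut_image[OF algebra_aut_tau[OF half_axis_y] half_axis_x] tau_y_x
    inv_unique_comp[OF tau_comp_tau tau_comp_tau, OF half_axis_y half_axis_y]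
  by simp

lemma tau_x_commute_tau_e_minus_x: "tau sc m x \<circ> tau sc m (e - x) = tau sc m (e - x) \<circ> tau sc m x"
proof (rule aut_commute_tau[OF algebra_aut_tau[OF half_axis_x] half_axis_e_minus_x])
  have "e - x \<in> eig sc m UNIV x 0"
    unfolding eig_def by (simp add: mult_diff_left e_mult_x x_idem)
  then show "tau sc m x (e - x) = e - x"
    using tau_Aplus[OF half_axis_x] eig_0_subset_Aplus by blast
qed

lemma tau_x_comp_tau_y_neq_id: "tau sc m x \<circ> tau sc m y \<noteq> id"
proof
  assume xy: "tau sc m x \<circ> tau sc m y = id"
  have "tau sc m x = tau sc m x \<circ> (tau sc m y \<circ> tau sc m y)"
    using tau_comp_tau[OF half_axis_y] by simp
  also have "\<dots> = tau sc m y" using xy by (simp only: o_assoc id_comp)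
  finally have "tau sc m x x = tau sc m y x" by simp
  moreover have "x \<in> Aplus sc m x"
    using eig_1_subset_Aplus x_idem unfolding eig_def by auto
  ultimately have "x = e - x" using tau_Aplus[OF half_axis_x] tau_y_x by simp
  then have "e = sc 2 x" using scale_left_distrib[of 1 1 x] by (simp add: algebra_simps)
  then show False using e_neq_2x by simp
qed

lemma
  shows ord_tau_comp_tau: "ord_fun (tau sc m x \<circ> tau sc m y) \<in> {2, 4}"
    and ord_tau_comp_tau_eq_2_iff: "ord_fun (tau sc m x \<circ> tau sc m y) = 2 \<longleftrightarrow>
      tau sc m x = tau sc m (e - x) \<and> tau sc m y = tau sc m (e - y)"
    and ord_tau_comp_tau_eq_4: "ord_fun (tau sc m x \<circ> tau sc m y) = 4 \<Longrightarrow>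
      tau sc m x \<circ> tau sc m (e - x) = tau sc m y \<circ> tau sc m (e - y)
      \<and> center (gen_grp {tau sc m x, tau sc m y}) = gen_grp {tau sc m x \<circ> tau sc m (e - x)}"
proof -
  interpret swap: axis_pair sc m y x e by (rule axis_pair_swap)
  note conjugates = tau_e_minus_x swap.tau_e_minus_x
  note dihedral = involutions_commuting_with_conjugate[OF tau_comp_tau[OF half_axis_x]
      tau_comp_tau[OF half_axis_y] tau_x_comp_tau_y_neq_id tau_x_commute_tau_e_minus_x[unfolded conjugates]]
  show "ord_fun (tau sc m x \<circ> tau sc m y) \<in> {2, 4}" by (rule dihedral(1))
  show "ord_fun (tau sc m x \<circ> tau sc m y) = 2 \<longleftrightarrow>
      tau sc m x = tau sc m (e - x) \<and> tau sc m y = tau sc m (e - y)"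
    unfolding conjugates by (rule dihedral(2))
  show "ord_fun (tau sc m x \<circ> tau sc m y) = 4 \<Longrightarrow>
      tau sc m x \<circ> tau sc m (e - x) = tau sc m y \<circ> tau sc m (e - y)
      \<and> center (gen_grp {tau sc m x, tau sc m y}) = gen_grp {tau sc m x \<circ> tau sc m (e - x)}"
    unfolding conjugates by (rule dihedral(3))
qed

lemma mult_axes_or_complements:
  assumes "u \<in> {x, e - x}" "v \<in> {y, e - y}"
  shows "m u v = sc (-1/4) e + sc (1/2) u + sc (1/2) v"
proof -
  from assms have "u = x \<or> u = e - x" "v = y \<or> v = e - y" by auto
  then show ?thesis
    by (elim disjE) (simp only: coord_simps cong: coord_cong; rule coord_eqI; simp add: field_simps nz)+
qed

lemma e_eq_axes_or_complements:
  assumes "u \<in> {x, e - x}" "v \<in> {y, e - y}"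
  shows "e = sc 2 u + sc 2 v - sc 4 (m u v)"
proof -
  from assms have "u = x \<or> u = e - x" "v = y \<or> v = e - y" by auto
  then show ?thesis
    by (elim disjE) (simp only: coord_simps cong: coord_cong; rule coord_eqI; simp add: field_simps nz)+
qed

lemma gen_alg_axes_or_complements:
  assumes u: "u \<in> {x, e - x}" and v: "v \<in> {y, e - y}"
  shows "gen_alg sc m {u, v} = gen_alg sc m {x, y}"
proof
  have "u \<in> coord_span" "v \<in> coord_span"
    using u v e_in_coord_span x_in_coord_span y_in_coord_span
      subspace_diff[OF subspace_coord_span]
    by auto
  then show "gen_alg sc m {u, v} \<subseteq> gen_alg sc m {x, y}"
    unfolding gen_alg_eq_coord_span by (intro gen_alg_least[OF subalg_coord_span]) simp
  let ?G = "gen_alg sc m {u, v}"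
  have uG: "u \<in> ?G" and vG: "v \<in> ?G" using gen_alg_superset by blast+
  have "e = sc 2 u + sc 2 v - sc 4 (m u v)" by (rule e_eq_axes_or_complements[OF u v])
  also have "\<dots> \<in> ?G"
    by (intro subspace_diff[OF subspace_gen_alg] subspace_add[OF subspace_gen_alg]
        subspace_scale[OF subspace_gen_alg] gen_alg_mult uG vG)
  finally have eG: "e \<in> ?G" .
  have "x = u \<or> x = e - u" "y = v \<or> y = e - v" using u v by auto
  then have "x \<in> ?G" "y \<in> ?G"
    using uG vG subspace_diff[OF subspace_gen_alg eG uG] subspace_diff[OF subspace_gen_alg eG vG]
    by auto
  then show "gen_alg sc m {x, y} \<subseteq> ?G"
    unfolding gen_alg_eq_coord_span by (rule coord_span_subset[OF subspace_gen_alg eG])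
qed

end

theorem lemma3p5:
  fixes sc :: "'f::field \<Rightarrow> 'v::ab_group_add \<Rightarrow> 'v"
    and m :: "'v \<Rightarrow> 'v \<Rightarrow> 'v"
    and a b e :: 'v
  defines "N \<equiv> gen_alg sc m {a, b}"
  assumes char: "(2::'f) \<noteq> 0"
    and A: "prim_axial_half sc m"
    and ha: "half_axis sc m a" and hb: "half_axis sc m b" and ab: "a \<noteq> b"
    and eN: "e \<in> N" and unit: "\<forall>n\<in>N. m e n = n"
    and prod: "m a b = sc (-1/4) e + sc (1/2) a + sc (1/2) b"
  shows "vector_space.dim sc N = 3
    \<and> (\<forall>x y. (x = a \<and> y = b \<or> x = b \<and> y = a) \<longrightarrow>
          tau sc m y x = e - x
        \<and> eig sc m N x (1/2) = range (\<lambda>c. sc c (e - sc 2 y)))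
    \<and> ord_fun (tau sc m a \<circ> tau sc m b) \<in> {2, 4}
    \<and> (ord_fun (tau sc m a \<circ> tau sc m b) = 2 \<longleftrightarrow>
         (\<forall>z\<in>{a, b}. tau sc m z = tau sc m (e - z)))
    \<and> (ord_fun (tau sc m a \<circ> tau sc m b) = 4 \<longrightarrow>
         tau sc m a \<circ> tau sc m (e - a) = tau sc m b \<circ> tau sc m (e - b)
       \<and> center (gen_grp {tau sc m a, tau sc m b}) = gen_grp {tau sc m a \<circ> tau sc m (e - a)})
    \<and> half_axis sc m (e - a) \<and> half_axis sc m (e - b)
    \<and> (\<forall>u\<in>{a, e - a}. \<forall>v\<in>{b, e - b}.
         m u v = sc (-1/4) e + sc (1/2) u + sc (1/2) v \<and> gen_alg sc m {u, v} = N)"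
proof -
  interpret axis_pair sc m a b e
    using comm_algebra_if_prim_axial_half[OF A] ha hb ab char eN unit prod
    unfolding N_def axis_pair_def axis_pair_axioms_def by blast
  interpret swap: axis_pair sc m b a e by (rule axis_pair_swap)
  have N_swap: "gen_alg sc m {b, a} = N" unfolding N_def by (simp add: insert_commute)
  show ?thesis
  proof (intro conjI)
    show "vector_space.dim sc N = 3" using dim_gen_alg unfolding N_def .
    show "\<forall>x y. (x = a \<and> y = b \<or> x = b \<and> y = a) \<longrightarrow>
        tau sc m y x = e - x \<and> eig sc m N x (1/2) = range (\<lambda>c. sc c (e - sc 2 y))"
      using tau_y_x swap.tau_y_x eig_half_gen_alg swap.eig_half_gen_alg N_swap unfolding N_def by auto
    show "\<forall>u\<in>{a, e - a}. \<forall>v\<in>{b, e - b}.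
        m u v = sc (-1/4) e + sc (1/2) u + sc (1/2) v \<and> gen_alg sc m {u, v} = N"
      using mult_axes_or_complements gen_alg_axes_or_complements unfolding N_def by blast
    show "ord_fun (tau sc m a \<circ> tau sc m b) = 2 \<longleftrightarrow> (\<forall>z\<in>{a, b}. tau sc m z = tau sc m (e - z))"
      using ord_tau_comp_tau_eq_2_iff by simp
  qed (use ord_tau_comp_tau ord_tau_comp_tau_eq_4 half_axis_e_minus_x swap.half_axis_e_minus_x in auto)
qed

end
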